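(* For every equidistributed infinite permutation $\alpha$ and every $n\ge1$, $p_{\alpha}(n)\geq n$.
   Context: An infinite permutation is an equivalence class of sequences $(a[n])_{n\ge0}$ of pairwise distinct reals, where two sequences are equivalent if $a[i]<a[j]\iff b[i]<b[j]$ for all $i,j$; write $\alpha=(\alpha[n])_{n\ge0}$ with the induced order. A factor of length $n$ is $\alpha[i..i+n-1]$ regarded as a finite permutation (relative order of its elements), independent of position; $p_\alpha(n)$ is the number of distinct factors of length $n$. A sequence $(a[n])$ in $[0,1]$ is equidistributed if $\lim_{n\to\infty}\frac{\#\{0\le i<n:a[i]<t\}}{n}=t$ for each $t\in[0,1]$; a permutation is equidistributed if it has an equidistributed representative in $[0,1]$. *)

theory Defs
  imports Complex_Main
begin

text \<open>An infinite permutation is represented by any representative sequence of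
pairwise distinct reals; two representatives are equivalent if they induce the same order.\<close>

definition order_equiv :: "(nat \<Rightarrow> real) \<Rightarrow> (nat \<Rightarrow> real) \<Rightarrow> bool" where
  "order_equiv a b \<longleftrightarrow> (\<forall>i j. a i < a j \<longleftrightarrow> b i < b j)"

text \<open>Factor of length n at position i, as a finite permutation: the relative order
of a[i], ..., a[i+n-1], encoded as the set of pairs (j,k) with j,k < n and a[i+j] < a[i+k].\<close>

definition factor :: "(nat \<Rightarrow> real) \<Rightarrow> nat \<Rightarrow> nat \<Rightarrow> (nat \<times> nat) set" where
  "factor a i n = {(j, k). j < n \<and> k < n \<and> a (i + j) < a (i + k)}"

definition factor_complexity :: "(nat \<Rightarrow> real) \<Rightarrow> nat \<Rightarrow> nat" where
  "factor_complexity a n = card {factor a i n | i. True}"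

definition equidistributed_seq :: "(nat \<Rightarrow> real) \<Rightarrow> bool" where
  "equidistributed_seq a \<longleftrightarrow> (\<forall>n. a n \<in> {0..1}) \<and>
     (\<forall>t\<in>{0..1}. (\<lambda>n. real (card {i. i < n \<and> a i < t}) / real n) \<longlonglongrightarrow> t)"

definition equidistributed_perm :: "(nat \<Rightarrow> real) \<Rightarrow> bool" where
  "equidistributed_perm a \<longleftrightarrow> (\<exists>b. inj b \<and> order_equiv a b \<and> equidistributed_seq b)"

end

theory Submission
  imports Defs
begin

text \<open>If \<open>p(n) < n\<close>, then at some length \<open>m\<close> extending factors of length \<open>m\<close> to length \<open>m+1\<close>
  is forced, so the sequence of factors of length \<open>m+1\<close> is eventually periodic with some period
  \<open>T \<le> m\<close>. Comparing the entries at distance \<open>T\<close> inside these factors shows that each of the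
  \<open>T\<close> subsequences \<open>a[N + r + kT]\<close> is monotone, hence convergent in an equidistributed
  representative. But then a whole interval avoiding the finitely many limits is eventually never
  visited, contradicting equidistribution.\<close>

definition factors :: "(nat \<Rightarrow> real) \<Rightarrow> nat \<Rightarrow> (nat \<times> nat) set set" where
  "factors a n = range (\<lambda>i. factor a i n)"

lemma factor_complexity_eq_card_factors: "factor_complexity a n = card (factors a n)"
  unfolding factor_complexity_def factors_def by (simp add: full_SetCompr_eq)

lemma finite_factors: "finite (factors a n)"
proof (rule finite_subset)
  show "factors a n \<subseteq> Pow ({..<n} \<times> {..<n})"
    unfolding factors_def factor_def by auto
qed simp

lemma factor_Suc_restrict: "factor a i (Suc m) \<inter> {..<m} \<times> {..<m} = factor a i m"
  unfolding factor_def by auto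

lemma factor_Suc_shift: "factor a (Suc i) m = {(j, k). (Suc j, Suc k) \<in> factor a i (Suc m)}"
  unfolding factor_def by auto

lemma complexity_plateau:
  assumes "factor_complexity a n < n"
  shows "\<exists>m. factor_complexity a (Suc m) \<le> m \<and> m \<le> factor_complexity a m"
  using assms
proof (induction n)
  case (Suc k)
  show ?case
  proof (cases "factor_complexity a k < k")
    case False
    then show ?thesis
      using Suc.prems by (intro exI[of _ k]) auto
  qed (rule Suc.IH)
qed simp

text \<open>At a plateau, restriction to the first \<open>m\<close> letters is a bijection from factors of length
  \<open>m+1\<close> onto factors of length \<open>m\<close>.\<close>

lemma factor_Suc_determined:
  assumes "factor_complexity a (Suc m) \<le> factor_complexity a m"
    and "factor a i m = factor a j m"
  shows "factor a i (Suc m) = factor a j (Suc m)"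
proof -
  define restrict where "restrict F = F \<inter> {..<m} \<times> {..<m}" for F :: "(nat \<times> nat) set"
  have "restrict ` factors a (Suc m) = factors a m"
    unfolding restrict_def factors_def by (auto simp: factor_Suc_restrict image_iff)
  then have "card (restrict ` factors a (Suc m)) \<ge> card (factors a (Suc m))"
    using assms(1) by (simp add: factor_complexity_eq_card_factors)
  then have "inj_on restrict (factors a (Suc m))"
    using card_image_le[OF finite_factors] eq_card_imp_inj_on[OF finite_factors]
    by (metis le_antisym)
  moreover have "restrict (factor a i (Suc m)) = restrict (factor a j (Suc m))"
    using assms(2) by (simp add: restrict_def factor_Suc_restrict)
  ultimately show ?thesis
    by (rule inj_onD) (auto simp: factors_def)
qed

lemma eventually_periodic_of_deterministic:
  fixes W :: "nat \<Rightarrow> 'b"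
  assumes step: "\<And>i j. W i = W j \<Longrightarrow> W (Suc i) = W (Suc j)"
    and small: "card (W ` {..m}) \<le> m"
  shows "\<exists>N T. 1 \<le> T \<and> T \<le> m \<and> (\<forall>k. W (N + k) = W (N + T + k))"
proof -
  have "\<not> inj_on W {..m}"
    using small by (auto dest: card_image)
  obtain x y where xy: "x < y" "y \<le> m" "W x = W y"
  proof -
    obtain u v where "u \<le> m" "v \<le> m" "u \<noteq> v" "W u = W v"
      using \<open>\<not> inj_on W {..m}\<close> unfolding inj_on_def by auto
    then show ?thesis
      using that[of u v] that[of v u] by (cases "u < v") auto
  qed
  have "W (x + k) = W (x + (y - x) + k)" for k
  proof (induction k)
    case (Suc k)
    then show ?case using step[OF Suc.IH] by simp
  qed (use xy in simp)
  then show ?thesis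
    using xy by (intro exI[of _ x] exI[of _ "y - x"]) auto
qed

lemma comparisons_invariant_imp_monoseq:
  fixes x :: "nat \<Rightarrow> real"
  assumes "\<And>k. (x k < x (Suc k)) = (x (Suc k) < x (Suc (Suc k)))"
  shows "monoseq x"
proof -
  have same: "(x k < x (Suc k)) = (x 0 < x 1)" for k
  proof (induction k)
    case (Suc k)
    then show ?case using assms[of k] by simp
  qed simp
  show ?thesis
  proof (cases "x 0 < x 1")
    case True
    then have "incseq x" using same by (intro incseq_SucI) (meson less_imp_le)
    then show ?thesis by (simp add: monoseq_iff)
  next
    case False
    then have "decseq x" using same by (intro decseq_SucI) (meson not_less)
    then show ?thesis by (simp add: monoseq_iff)
  qed
qed

lemma low_complexity_imp_monotone_residue_subsequences:
  assumes "factor_complexity a n < n"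
  shows "\<exists>N T. T \<ge> 1 \<and> (\<forall>r. monoseq (\<lambda>k. a (N + r + k * T)))"
proof -
  obtain m where m: "factor_complexity a (Suc m) \<le> m" "m \<le> factor_complexity a m"
    using complexity_plateau[OF assms] by blast
  define W where "W i = factor a i (Suc m)" for i
  have step: "W (Suc i) = W (Suc j)" if "W i = W j" for i j
  proof -
    have "factor a (Suc i) m = factor a (Suc j) m"
      using that unfolding W_def factor_Suc_shift[of a i] factor_Suc_shift[of a j] by simp
    then show ?thesis
      unfolding W_def using m by (intro factor_Suc_determined) auto
  qed
  have "card (W ` {..m}) \<le> card (factors a (Suc m))"
    by (intro card_mono finite_factors) (auto simp: W_def factors_def)
  with m(1) have "card (W ` {..m}) \<le> m"
    by (simp add: factor_complexity_eq_card_factors)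
  then obtain N T where NT: "\<And>k. W (N + k) = W (N + T + k)" "1 \<le> T" "T \<le> m"
    using eventually_periodic_of_deterministic[of W m, OF step] by blast
  \<comment> \<open>The pair \<open>(0, T)\<close> of a factor of length \<open>m+1\<close> records the comparison of \<open>a[i]\<close> with \<open>a[i+T]\<close>.\<close>
  have compare: "(a i < a (i + T)) = (a (i + T) < a (i + T + T))" if "i \<ge> N" for i
  proof -
    obtain k where "i = N + k" using \<open>i \<ge> N\<close> le_Suc_ex by blast
    then have "W i = W (i + T)" using NT(1)[of k] by (simp add: ac_simps)
    moreover have "(0, T) \<in> W j \<longleftrightarrow> a j < a (j + T)" for j
      using NT(3) by (simp add: W_def factor_def)
    ultimately show ?thesis by blast
  qed
  have "monoseq (\<lambda>k. a (N + r + k * T))" for r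
  proof (rule comparisons_invariant_imp_monoseq)
    show "(a (N + r + k * T) < a (N + r + Suc k * T)) =
        (a (N + r + Suc k * T) < a (N + r + Suc (Suc k) * T))" for k
      using compare[of "N + r + k * T"] by (simp add: algebra_simps)
  qed
  then show ?thesis using NT(2) by blast
qed

lemma order_equiv_monoseq:
  assumes "order_equiv a b" and "monoseq (\<lambda>k. a (f k))"
  shows "monoseq (\<lambda>k. b (f k))"
proof -
  have "a i \<le> a j \<longleftrightarrow> b i \<le> b j" for i j
    using assms(1) unfolding order_equiv_def by (metis not_less)
  then show ?thesis using assms(2) unfolding monoseq_def by simp
qed

lemma equidistributed_seq_frequently_in_interval:
  assumes "equidistributed_seq b" and "0 \<le> t" "t < t'" "t' \<le> 1"
  shows "\<exists>i\<ge>M. t \<le> b i \<and> b i < t'"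
proof (rule ccontr)
  assume "\<not> ?thesis"
  then have avoid: "b i < t' \<Longrightarrow> b i < t \<or> i < M" for i by (meson not_le)
  define count where "count s n = real (card {i. i < n \<and> b i < s})" for s n
  have lim: "(\<lambda>n. count s n / real n) \<longlonglongrightarrow> s" if "s \<in> {0..1}" for s
    using assms(1) that unfolding equidistributed_seq_def count_def by blast
  have "count t' n \<le> count t n + real M" for n
  proof -
    have "card {i. i < n \<and> b i < t'} \<le> card ({i. i < n \<and> b i < t} \<union> {..<M})"
      using avoid by (intro card_mono) auto
    also have "\<dots> \<le> card {i. i < n \<and> b i < t} + M"
      by (metis card_Un_le card_lessThan)
    finally show ?thesis unfolding count_def by simp
  qed
  then have "count t' n / real n \<le> count t n / real n + real M / real n" for n
    by (simp add: divide_right_mono flip: add_divide_distrib)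
  moreover have "(\<lambda>n. count t n / real n + real M / real n) \<longlonglongrightarrow> t + 0"
    using assms by (intro tendsto_add lim lim_const_over_n) auto
  ultimately have "t' \<le> t + 0"
    using assms by (intro LIMSEQ_le[OF lim]) auto
  then show False using \<open>t < t'\<close> by simp
qed

lemma interval_avoiding_finite_set:
  fixes L :: "real set"
  assumes "finite L"
  obtains t t' where "0 \<le> t" "t < t'" "t' \<le> 1" "{t..t'} \<inter> L = {}"
proof -
  have "open ({0<..<1} - L)"
    using assms by (intro open_Diff finite_imp_closed) auto
  moreover have "{0<..<1::real} - L \<noteq> {}"
  proof
    assume "{0<..<1::real} - L = {}"
    then have "finite {0<..<1::real}"
      using assms finite_subset by (metis Diff_eq_empty_iff)
    then show False using infinite_Ioo[of "0::real" 1] by simp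
  qed
  ultimately obtain t0 e where "e > 0" and ball: "\<And>y. dist y t0 < e \<Longrightarrow> y \<in> {0<..<1} - L"
    unfolding open_dist by blast
  have seg: "y \<in> {0<..<1} - L" if "y \<in> {t0 - e/2..t0 + e/2}" for y
    using that \<open>e > 0\<close> by (intro ball) (auto simp: dist_real_def)
  show ?thesis
  proof (rule that)
    show "0 \<le> t0 - e/2" "t0 + e/2 \<le> 1"
      using seg[of "t0 - e/2"] seg[of "t0 + e/2"] \<open>e > 0\<close> by auto
    show "{t0 - e/2..t0 + e/2} \<inter> L = {}"
      using seg by blast
  qed (use \<open>e > 0\<close> in simp)
qed

lemma eventually_avoids_interval_of_convergent_residues:
  fixes b :: "nat \<Rightarrow> real"
  assumes "T \<ge> 1" and lim: "\<And>r. r < T \<Longrightarrow> (\<lambda>k. b (N + r + k * T)) \<longlonglongrightarrow> c r"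
    and avoid: "{t..t'} \<inter> c ` {..<T} = {}"
  shows "\<exists>M. \<forall>i\<ge>M. b i \<notin> {t..t'}"
proof -
  have "\<forall>\<^sub>F k in sequentially. \<forall>r\<in>{..<T}. b (N + r + k * T) \<notin> {t..t'}"
  proof (intro eventually_ball_finite ballI)
    fix r assume "r \<in> {..<T}"
    then have "c r \<notin> {t..t'}" using avoid by blast
    then have "c r < t \<or> c r > t'" by auto
    then show "\<forall>\<^sub>F k in sequentially. b (N + r + k * T) \<notin> {t..t'}"
      using order_tendstoD[OF lim] \<open>r \<in> {..<T}\<close>
      by (elim disjE) (force elim: eventually_mono)+
  qed simp
  then obtain K where K: "\<And>k r. k \<ge> K \<Longrightarrow> r < T \<Longrightarrow> b (N + r + k * T) \<notin> {t..t'}"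
    unfolding eventually_sequentially by blast
  have "b i \<notin> {t..t'}" if "i \<ge> N + K * T" for i
  proof -
    have "i = N + (i - N) mod T + (i - N) div T * T"
      using that by simp
    moreover have "K \<le> (i - N) div T"
      using that \<open>T \<ge> 1\<close> div_le_mono[of "K * T" "i - N" T] by simp
    ultimately show ?thesis
      using K \<open>T \<ge> 1\<close> by (metis mod_less_divisor less_le_trans zero_less_one)
  qed
  then show ?thesis by blast
qed

lemma equidistributed_seq_not_monotone_residues:
  assumes eq: "equidistributed_seq b" and "T \<ge> 1"
    and mono: "\<And>r. monoseq (\<lambda>k. b (N + r + k * T))"
  shows False
proof -
  have "Bseq (\<lambda>k. b (N + r + k * T))" for r
    using eq unfolding equidistributed_seq_def by (intro BseqI'[of _ 1]) auto
  then have conv: "(\<lambda>k. b (N + r + k * T)) \<longlonglongrightarrow> lim (\<lambda>k. b (N + r + k * T))" for r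
    using mono Bseq_monoseq_convergent convergent_LIMSEQ_iff by blast
  obtain t t' where t: "0 \<le> t" "t < t'" "t' \<le> 1"
    and avoid: "{t..t'} \<inter> (\<lambda>r. lim (\<lambda>k. b (N + r + k * T))) ` {..<T} = {}"
    using interval_avoiding_finite_set[of "(\<lambda>r. lim (\<lambda>k. b (N + r + k * T))) ` {..<T}"]
    by blast
  have "\<exists>M. \<forall>i\<ge>M. b i \<notin> {t..t'}"
    by (rule eventually_avoids_interval_of_convergent_residues[OF \<open>T \<ge> 1\<close> conv avoid])
  then show False
    using equidistributed_seq_frequently_in_interval[OF eq t] by fastforce
qed

theorem proposition3:
  fixes a :: "nat \<Rightarrow> real" and n :: nat
  assumes "inj a" and "equidistributed_perm a" and "n \<ge> 1"
  shows "factor_complexity a n \<ge> n"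
proof (rule ccontr)
  assume "\<not> factor_complexity a n \<ge> n"
  then have "\<exists>N T. T \<ge> 1 \<and> (\<forall>r. monoseq (\<lambda>k. a (N + r + k * T)))"
    by (intro low_complexity_imp_monotone_residue_subsequences[of a n]) simp
  then obtain N T where "T \<ge> 1" and mono: "\<And>r. monoseq (\<lambda>k. a (N + r + k * T))"
    by blast
  obtain b where b: "order_equiv a b" "equidistributed_seq b"
    using assms(2) unfolding equidistributed_perm_def by blast
  have "monoseq (\<lambda>k. b (N + r + k * T))" for r
    using order_equiv_monoseq[OF b(1) mono] .
  then show False
    using equidistributed_seq_not_monotone_residues[OF b(2) \<open>T \<ge> 1\<close>] by blast
qed

end
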